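(* For every integer $n\ge 2$, $$ \frac{1}{3}\left(2^{n-1}+\frac{5+(-1)^n}{2}2^{\lfloor n/2\rfloor-1}+\frac{-1+(-1)^n+2(-1)^{\lfloor (n+1)/2\rfloor n}}{2}\right) =\sum_{d=0}^{\lfloor (n-2)/2\rfloor}\left(F_{n-d-1}^{(d)}+\frac{1+(-1)^{nd}}{2}F^{(\lfloor d/2\rfloor)}_{\lfloor n/2\rfloor-\lfloor (d+1)/2\rfloor}\right). $$
   Context: $F_0,F_1,F_2,\dots=0,1,1,2,3,5,\dots$ is the Fibonacci sequence, and the convolved Fibonacci sequences are defined by $F_m^{(0)}=F_m$ and $F_m^{(c+1)}=\sum_{i=0}^{m}F_iF_{m-i}^{(c)}$ for $m\ge 0$, $c\ge 0$. *)

theory Defs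
  imports Complex_Main "HOL-Number_Theory.Fib"
begin

fun conv_fib :: "nat \<Rightarrow> nat \<Rightarrow> nat" where
  "conv_fib 0 m = fib m"
| "conv_fib (Suc c) m = (\<Sum>i=0..m. fib i * conv_fib c (m - i))"

end

theory Submission
  imports Defs
begin

(* Let B n = (SUM d. F^(d)_(n-d)) be the antidiagonal sums of the convolved Fibonacci numbers.
   Since F_0 = 0, F^(d)_m vanishes for m <= d, and the recurrence
   F^(c+1)_(m+2) = F^(c+1)_(m+1) + F^(c+1)_m + F^(c)_(m+1) sums along antidiagonals to
   B (n+2) = B (n+1) + 2 B n, so B n = (2^n - (-1)^n) / 3 are the Jacobsthal numbers.
   By the vanishing, the first sum on the right is the full antidiagonal sum B (n-1), and
   splitting the second one by the parity of d gives B (n div 2) + [n even] B (n div 2 - 1).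
   The left-hand side is exactly this combination of Jacobsthal numbers. *)

lemma conv_fib_eq_0: "m \<le> c \<Longrightarrow> conv_fib c m = 0"
proof (induction c arbitrary: m)
  case 0
  then show ?case by simp
next
  case (Suc c)
  have "fib i * conv_fib c (m - i) = 0" for i
    using Suc by (cases i) simp_all
  then show ?case by simp
qed

lemma conv_fib_Suc_Suc:
  "conv_fib (Suc c) (Suc (Suc m)) =
     conv_fib (Suc c) (Suc m) + conv_fib (Suc c) m + conv_fib c (Suc m)"
proof -
  have "conv_fib (Suc c) (Suc (Suc m)) =
      conv_fib c (Suc m) + (\<Sum>i\<le>m. fib (Suc (Suc i)) * conv_fib c (m - i))"
    by (simp only: conv_fib.simps atLeast0AtMost sum.atMost_Suc_shift) (simp del: sum.atMost_Suc)
  also have "\<dots> = conv_fib c (Suc m) + (\<Sum>i\<le>m. fib (Suc i) * conv_fib c (m - i))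
      + (\<Sum>i\<le>m. fib i * conv_fib c (m - i))"
    by (simp add: sum.distrib algebra_simps)
  also have "(\<Sum>i\<le>m. fib (Suc i) * conv_fib c (m - i)) = conv_fib (Suc c) (Suc m)"
    by (simp only: conv_fib.simps atLeast0AtMost sum.atMost_Suc_shift) (simp del: sum.atMost_Suc)
  also have "(\<Sum>i\<le>m. fib i * conv_fib c (m - i)) = conv_fib (Suc c) m"
    by (simp add: atLeast0AtMost)
  finally show ?thesis by simp
qed

definition conv_fib_diag :: "nat \<Rightarrow> nat" where
  "conv_fib_diag n = (\<Sum>d\<le>n. conv_fib d (n - d))"

lemma conv_fib_diag_eq_partial_sum:
  assumes "n \<le> 2 * k + 2"
  shows "(\<Sum>d\<le>k. conv_fib d (n - d)) = conv_fib_diag n"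
proof -
  have "(\<Sum>d\<le>k. conv_fib d (n - d)) = (\<Sum>d\<le>n + k. conv_fib d (n - d))"
  proof (intro sum.mono_neutral_left)
    show "\<forall>d \<in> {..n + k} - {..k}. conv_fib d (n - d) = 0"
    proof
      fix d assume "d \<in> {..n + k} - {..k}"
      with assms have "n - d \<le> d" by auto
      then show "conv_fib d (n - d) = 0" by (rule conv_fib_eq_0)
    qed
  qed auto
  also have "\<dots> = conv_fib_diag n"
    unfolding conv_fib_diag_def by (intro sum.mono_neutral_right) (auto simp: conv_fib_eq_0)
  finally show ?thesis .
qed

lemma conv_fib_diag_Suc_Suc:
  "conv_fib_diag (Suc (Suc n)) = conv_fib_diag (Suc n) + 2 * conv_fib_diag n"
proof -
  have summand: "conv_fib d (Suc (Suc n) - d) = conv_fib d (Suc n - d) + conv_fib d (n - d)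
      + (if d = 0 then 0 else conv_fib (d - 1) (Suc n - d))" if "d \<le> n" for d
  proof (cases d)
    case 0
    then show ?thesis by simp
  next
    case (Suc c)
    with that have "Suc (Suc n) - d = Suc (Suc (n - d))" "Suc n - d = Suc (n - d)"
      by auto
    with Suc show ?thesis by (simp del: conv_fib.simps add: conv_fib_Suc_Suc)
  qed
  have shifted: "(\<Sum>d\<le>n. if d = 0 then 0 else conv_fib (d - 1) (Suc n - d)) = conv_fib_diag n"
  proof (cases n)
    case 0
    then show ?thesis by (simp add: conv_fib_diag_def)
  next
    case (Suc k)
    then show ?thesis
      by (simp only: sum.atMost_Suc_shift) (simp add: conv_fib_diag_def conv_fib_eq_0)
  qed
  have "conv_fib_diag (Suc (Suc n)) = (\<Sum>d\<le>n. conv_fib d (Suc (Suc n) - d))"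
    using conv_fib_diag_eq_partial_sum[of "Suc (Suc n)" n] by simp
  also have "\<dots> = (\<Sum>d\<le>n. conv_fib d (Suc n - d)) + (\<Sum>d\<le>n. conv_fib d (n - d))
      + (\<Sum>d\<le>n. if d = 0 then 0 else conv_fib (d - 1) (Suc n - d))"
    by (simp add: summand sum.distrib)
  also have "\<dots> = conv_fib_diag (Suc n) + conv_fib_diag n + conv_fib_diag n"
    using conv_fib_diag_eq_partial_sum[of "Suc n" n] shifted by (simp add: conv_fib_diag_def)
  finally show ?thesis by simp
qed

lemma conv_fib_diag_closed_form:
  "3 * (of_nat (conv_fib_diag n) :: 'a::comm_ring_1) = 2 ^ n - (-1) ^ n"
proof (induction n rule: fib.induct)
  case 1
  then show ?case by (simp add: conv_fib_diag_def)
next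
  case 2
  then show ?case by (simp add: conv_fib_diag_def)
next
  case (3 n)
  have "3 * (of_nat (conv_fib_diag (Suc (Suc n))) :: 'a)
      = 3 * of_nat (conv_fib_diag (Suc n)) + 2 * (3 * of_nat (conv_fib_diag n))"
    by (simp add: conv_fib_diag_Suc_Suc algebra_simps)
  also have "\<dots> = (2 ^ Suc n - (-1) ^ Suc n) + 2 * (2 ^ n - (-1) ^ n)"
    using 3 by simp
  also have "\<dots> = 2 ^ Suc (Suc n) - (-1) ^ Suc (Suc n)"
    by (simp add: algebra_simps)
  finally show ?case .
qed

lemma sum_conv_fib_half_index:
  fixes a b :: "'a::comm_semiring_1"
  shows "(\<Sum>d\<le>k. (if even d then a else b) * of_nat (conv_fib (d div 2) (k + 1 - (d + 1) div 2)))
    = a * of_nat (conv_fib_diag (k + 1)) + b * of_nat (conv_fib_diag k)"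
proof -
  let ?f = "\<lambda>d. (if even d then a else b) * of_nat (conv_fib (d div 2) (k + 1 - (d + 1) div 2))"
  have "sum ?f {..k} = sum ?f {..Suc (2 * (k + 1))}"
  proof (intro sum.mono_neutral_left)
    show "\<forall>d \<in> {..Suc (2 * (k + 1))} - {..k}. ?f d = 0"
    proof
      fix d assume "d \<in> {..Suc (2 * (k + 1))} - {..k}"
      then have "k + 1 - (d + 1) div 2 \<le> d div 2" by auto
      then show "?f d = 0" by (simp add: conv_fib_eq_0)
    qed
  qed auto
  also have "\<dots> = (\<Sum>e\<le>k + 1. a * of_nat (conv_fib e (k + 1 - e)) + b * of_nat (conv_fib e (k - e)))"
    by (subst sum.in_pairs_0) simp
  also have "\<dots> = a * of_nat (\<Sum>e\<le>k + 1. conv_fib e (k + 1 - e))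
      + b * of_nat (\<Sum>e\<le>k + 1. conv_fib e (k - e))"
    by (simp add: sum.distrib sum_distrib_left)
  also have "\<dots> = a * of_nat (conv_fib_diag (k + 1)) + b * of_nat (conv_fib_diag k)"
    using conv_fib_diag_eq_partial_sum[of k "k + 1"] by (simp add: conv_fib_diag_def)
  finally show ?thesis .
qed

lemma sum_conv_fib_eq_conv_fib_diag:
  fixes n :: nat
  assumes "n \<ge> 2"
  shows "(\<Sum>d=0..(n - 2) div 2.
            real (conv_fib d (n - d - 1))
            + ((1 + (-1) ^ (n * d)) / 2) * real (conv_fib (d div 2) (n div 2 - (d + 1) div 2)))
    = real (conv_fib_diag (n - 1)) + real (conv_fib_diag (n div 2))
      + of_bool (even n) * real (conv_fib_diag (n div 2 - 1))"
proof -
  define k where "k = (n - 2) div 2"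
  have n_div_2: "n div 2 = k + 1" and "n - 1 \<le> 2 * k + 2"
    using assms unfolding k_def by auto
  have weight: "(1 + (-1::real) ^ (n * d)) / 2 = (if even d then 1 else of_bool (even n))" for d
    by (simp add: minus_one_power_iff)
  have "(\<Sum>d\<le>k. real (conv_fib d (n - 1 - d))) = real (conv_fib_diag (n - 1))"
    using conv_fib_diag_eq_partial_sum[OF \<open>n - 1 \<le> 2 * k + 2\<close>] by (metis of_nat_sum)
  moreover have "(\<Sum>d\<le>k. (if even d then 1 else of_bool (even n))
        * real (conv_fib (d div 2) (k + 1 - (d + 1) div 2)))
      = real (conv_fib_diag (k + 1)) + of_bool (even n) * real (conv_fib_diag k)"
    using sum_conv_fib_half_index[of "1::real"] by simp
  ultimately show ?thesis
    by (simp add: atLeast0AtMost k_def [symmetric] n_div_2 weight sum.distrib)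
qed

theorem corollary1:
  fixes n :: nat
  assumes "n \<ge> 2"
  shows "(1/3::real) * (2 ^ (n - 1)
            + ((5 + (-1) ^ n) / 2) * 2 ^ (n div 2 - 1)
            + (-1 + (-1) ^ n + 2 * (-1) ^ (((n + 1) div 2) * n)) / 2)
         = (\<Sum>d=0..(n - 2) div 2.
              real (conv_fib d (n - d - 1))
              + ((1 + (-1) ^ (n * d)) / 2) * real (conv_fib (d div 2) (n div 2 - (d + 1) div 2)))"
proof -
  define m where "m = n div 2 - 1"
  note closed_form = conv_fib_diag_closed_form [where 'a = real]
  show ?thesis
  proof (cases "even n")
    case True
    then have n: "n - 1 = 2 * m + 1" "n div 2 = m + 1"
      and signs: "(-1::real) ^ n = 1" "(-1::real) ^ (((n + 1) div 2) * n) = 1"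
      using assms unfolding m_def by auto
    show ?thesis
      unfolding sum_conv_fib_eq_conv_fib_diag [OF assms] unfolding n signs
      using True closed_form [of "2 * m + 1"] closed_form [of "m + 1"] closed_form [of m]
      by simp
  next
    case False
    with assms have "n = 2 * m + 3"
      unfolding m_def by presburger
    then have n: "n - 1 = 2 * m + 2" "n div 2 = m + 1"
      and signs: "(-1::real) ^ n = -1" "(-1::real) ^ (((n + 1) div 2) * n) = (-1) ^ (m + 2)"
      by (auto simp: minus_one_power_iff)
    show ?thesis
      unfolding sum_conv_fib_eq_conv_fib_diag [OF assms] unfolding n signs
      using False closed_form [of "2 * m + 2"] closed_form [of "m + 1"]
      by (simp add: field_simps)
  qed
qed

end
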